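(* If $b$ is a super-core of a length-preserving function $f:\{0,1\}^n\to\{0,1\}^n$ computable by polynomial-size circuits, then $g(x):=f(x)b(x)$ (concatenation, $g:\{0,1\}^n\to\{0,1\}^{n+1}$) is a super-bit.
   Context: A predicate $b$ computable by polynomial-size circuits is a super-core of $f:\{0,1\}^n\to\{0,1\}^{m(n)}$ if there do not exist a nondeterministic polynomial-size circuit family $\mathcal{A}_1$ (accepting iff some witness gives output 1), a co-nondeterministic polynomial-size circuit family $\mathcal{A}_2$ (rejecting iff some witness gives output 0), a polynomial $p$ and infinitely many $n$ such that either $\Pr_{x\in\{0,1\}^n}[\mathcal{A}_1(f(x),1^n)=b(x)=0]+\tfrac12\Pr_{y\in\{0,1\}^{m(n)}}[\mathcal{A}_1(y,1^n)=1]\ge \tfrac12+\tfrac1{p(n)}$ or $\Pr_{x}[\mathcal{A}_2(f(x),1^n)=b(x)=1]+\tfrac12\Pr_{y}[\mathcal{A}_2(y,1^n)=0]\ge \tfrac12+\tfrac1{p(n)}$. A generator $g:\{0,1\}^n\to\{0,1\}^{n+1}$ computable by polynomial-size circuits is a super-bit if for every nondeterministic polynomial-size circuit family $D$, every polynomial $p$ and all sufficiently large $n$, $\Pr[D(U_{n+1})=1]-\Pr[D(g(U_n))=1]<1/p(n)$, where $U_k$ is uniform on $\{0,1\}^k$. *)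

theory Defs
  imports "HOL-Computational_Algebra.Polynomial"
begin

text \<open>A circuit on an input of length k: wires 0..k-1 carry the input bits, the i-th gate
  defines wire k+i and may only refer to earlier wires (references to non-existing wires
  read False).\<close>

datatype gate = GConst bool | GNot nat | GAnd nat nat | GOr nat nat

type_synonym circuit = "gate list \<times> nat list"

definition wire :: "bool list \<Rightarrow> nat \<Rightarrow> bool" where
  "wire ws i = (if i < length ws then ws ! i else False)"

fun gate_val :: "bool list \<Rightarrow> gate \<Rightarrow> bool" where
  "gate_val ws (GConst c) = c"
| "gate_val ws (GNot i) = (\<not> wire ws i)"
| "gate_val ws (GAnd i j) = (wire ws i \<and> wire ws j)"
| "gate_val ws (GOr i j) = (wire ws i \<or> wire ws j)"

fun eval_wires :: "bool list \<Rightarrow> gate list \<Rightarrow> bool list" where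
  "eval_wires ws [] = ws"
| "eval_wires ws (g # gs) = eval_wires (ws @ [gate_val ws g]) gs"

definition circ_eval :: "circuit \<Rightarrow> bool list \<Rightarrow> bool list" where
  "circ_eval C xs = map (wire (eval_wires xs (fst C))) (snd C)"

definition circ_size :: "circuit \<Rightarrow> nat" where
  "circ_size C = length (fst C) + length (snd C)"

definition out1 :: "circuit \<Rightarrow> bool list \<Rightarrow> bool" where
  "out1 C xs = (case circ_eval C xs of [v] \<Rightarrow> v | _ \<Rightarrow> False)"

definition poly_bounded :: "(nat \<Rightarrow> nat) \<Rightarrow> bool" where
  "poly_bounded s \<longleftrightarrow> (\<exists>q :: nat poly. \<forall>n. s n \<le> poly q n)"

text \<open>Computable by a (non-uniform) family of polynomial-size circuits, indexed by input length.\<close>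
definition poly_computable :: "(bool list \<Rightarrow> bool list) \<Rightarrow> bool" where
  "poly_computable f \<longleftrightarrow>
     (\<exists>C :: nat \<Rightarrow> circuit. poly_bounded (\<lambda>n. circ_size (C n)) \<and>
        (\<forall>x. circ_eval (C (length x)) x = f x))"

definition poly_computable_pred :: "(bool list \<Rightarrow> bool) \<Rightarrow> bool" where
  "poly_computable_pred b \<longleftrightarrow> poly_computable (\<lambda>x. [b x])"

text \<open>A (co-)nondeterministic circuit is a circuit together with a witness length k;
  it is run on input y @ w for witnesses w of length k.\<close>
type_synonym ndcircuit = "circuit \<times> nat"

definition nd_size :: "ndcircuit \<Rightarrow> nat" where
  "nd_size A = circ_size (fst A) + snd A"

definition nd_accepts :: "ndcircuit \<Rightarrow> bool list \<Rightarrow> bool" where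
  "nd_accepts A y \<longleftrightarrow> (\<exists>w. length w = snd A \<and> out1 (fst A) (y @ w))"

definition cond_accepts :: "ndcircuit \<Rightarrow> bool list \<Rightarrow> bool" where
  "cond_accepts A y \<longleftrightarrow> \<not> (\<exists>w. length w = snd A \<and> \<not> out1 (fst A) (y @ w))"

definition prob :: "nat \<Rightarrow> (bool list \<Rightarrow> bool) \<Rightarrow> real" where
  "prob n P = real (card {x :: bool list. length x = n \<and> P x}) / 2 ^ n"

text \<open>f maps {0,1}^n to {0,1}^(m n). Polynomials p in the advantage bounds are nonzero
  polynomials with natural coefficients (so eventually positive).\<close>
definition super_core :: "(nat \<Rightarrow> nat) \<Rightarrow> (bool list \<Rightarrow> bool list) \<Rightarrow> (bool list \<Rightarrow> bool) \<Rightarrow> bool" where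
  "super_core m f b \<longleftrightarrow> poly_computable_pred b \<and>
     \<not> (\<exists>(A1 :: nat \<Rightarrow> ndcircuit) (A2 :: nat \<Rightarrow> ndcircuit) (p :: nat poly).
          poly_bounded (\<lambda>n. nd_size (A1 n)) \<and> poly_bounded (\<lambda>n. nd_size (A2 n)) \<and> p \<noteq> 0 \<and>
          infinite {n.
            prob n (\<lambda>x. \<not> nd_accepts (A1 n) (f x) \<and> \<not> b x)
              + 1/2 * prob (m n) (\<lambda>y. nd_accepts (A1 n) y) \<ge> 1/2 + 1 / real (poly p n)
          \<or> prob n (\<lambda>x. cond_accepts (A2 n) (f x) \<and> b x)
              + 1/2 * prob (m n) (\<lambda>y. \<not> cond_accepts (A2 n) y) \<ge> 1/2 + 1 / real (poly p n)})"

definition super_bit :: "(bool list \<Rightarrow> bool list) \<Rightarrow> bool" where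
  "super_bit g \<longleftrightarrow> poly_computable g \<and>
     (\<forall>D :: nat \<Rightarrow> ndcircuit. poly_bounded (\<lambda>n. nd_size (D n)) \<longrightarrow>
       (\<forall>p :: nat poly. p \<noteq> 0 \<longrightarrow>
         (\<exists>N. \<forall>n\<ge>N. prob (n + 1) (\<lambda>y. nd_accepts (D n) y)
                      - prob n (\<lambda>x. nd_accepts (D n) (g x)) < 1 / real (poly p n))))"

end

theory Submission
  imports Defs
begin

text \<open>Let D be a nondeterministic circuit with advantage \<epsilon> in telling uniform (n+1)-bit
  strings from f x @ [b x]. Fixing the last input bit of D to 0 gives a nondeterministic
  circuit A1 y = D (y @ [0]); fixing it to 1 and complementing gives a co-nondeterministic
  circuit A2 rejecting iff D (y @ [1]) accepts. Averaging over the last bit, the two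
  super-core quantities of A1 and A2 add up to at least 1 + \<epsilon>, so one of them is at least
  1/2 + \<epsilon>/2; for infinitely many n this contradicts the super-core property.\<close>

lemma poly_bounded_le:
  assumes "poly_bounded t" "\<And>n. s n \<le> t n + c"
  shows "poly_bounded s"
proof -
  obtain q where q: "\<And>n. t n \<le> poly q n" using assms(1) unfolding poly_bounded_def by blast
  have "s n \<le> poly (q + [:c:]) n" for n using q[of n] assms(2)[of n] by simp
  then show ?thesis unfolding poly_bounded_def by blast
qed

lemma poly_bounded_add:
  assumes "poly_bounded s" "poly_bounded t"
  shows "poly_bounded (\<lambda>n. s n + t n)"
proof -
  obtain q where q: "\<And>n. s n \<le> poly q n" using assms(1) unfolding poly_bounded_def by blast
  obtain r where r: "\<And>n. t n \<le> poly r n" using assms(2) unfolding poly_bounded_def by blast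
  have "s n + t n \<le> poly (q + r) n" for n using q[of n] r[of n] by simp
  then show ?thesis unfolding poly_bounded_def by blast
qed

lemma eval_wires_append: "eval_wires ws (gs @ hs) = eval_wires (eval_wires ws gs) hs"
  by (induction gs arbitrary: ws) auto

lemma eval_wires_extends: "\<exists>v. eval_wires ws gs = ws @ v \<and> length v = length gs"
proof (induction gs arbitrary: ws)
  case Nil
  then show ?case by simp
next
  case (Cons g gs)
  from Cons[of "ws @ [gate_val ws g]"] show ?case by fastforce
qed

fun map_gate :: "(nat \<Rightarrow> nat) \<Rightarrow> gate \<Rightarrow> gate" where
  "map_gate r (GConst c) = GConst c"
| "map_gate r (GNot i) = GNot (r i)"
| "map_gate r (GAnd i j) = GAnd (r i) (r j)"
| "map_gate r (GOr i j) = GOr (r i) (r j)"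

text \<open>Relabelling of the wires of a circuit on n inputs with at most N wires, when K new wires
  are inserted after the inputs: inputs stay, gate wires move up by K, and references to
  non-existing wires are redirected to a wire z that carries False.\<close>
definition shift_wires :: "nat \<Rightarrow> nat \<Rightarrow> nat \<Rightarrow> nat \<Rightarrow> nat \<Rightarrow> nat" where
  "shift_wires n K N z j = (if j < n then j else if j < N then j + K else z)"

lemma wire_shift_wires:
  assumes "length x = n" "length mid = K" "z < n + K" "\<not> (x @ mid) ! z" "n + length u \<le> N"
  shows "wire (x @ mid @ u) (shift_wires n K N z j) = wire (x @ u) j"
  using assms by (auto simp: wire_def shift_wires_def nth_append)

lemma eval_wires_shift_wires:
  assumes "length x = n" "length mid = K" "z < n + K" "\<not> (x @ mid) ! z"
    and "n + length u + length gs \<le> N"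
  shows "eval_wires (x @ mid @ u) (map (map_gate (shift_wires n K N z)) gs)
           = x @ mid @ drop n (eval_wires (x @ u) gs)"
  using assms(5)
proof (induction gs arbitrary: u)
  case Nil
  then show ?case using assms by simp
next
  case (Cons g gs)
  have "gate_val (x @ mid @ u) (map_gate (shift_wires n K N z) g) = gate_val (x @ u) g"
    using wire_shift_wires[OF assms(1-4)] Cons.prems by (cases g) auto
  then show ?case
    using Cons.IH[of "u @ [gate_val (x @ u) g]"] Cons.prems by simp
qed

text \<open>The constant-False gate between the two gate lists absorbs all out-of-range wire
  references.\<close>
definition circ_concat :: "nat \<Rightarrow> circuit \<Rightarrow> circuit \<Rightarrow> circuit" where
  "circ_concat n Cf Cb = (let z = n + length (fst Cf);
      r = shift_wires n (length (fst Cf) + 1) (n + length (fst Cb)) z in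
     (fst Cf @ [GConst False] @ map (map_gate r) (fst Cb),
      map (\<lambda>q. if q < z then q else z) (snd Cf) @ map r (snd Cb)))"

lemma circ_size_circ_concat: "circ_size (circ_concat n Cf Cb) = circ_size Cf + circ_size Cb + 1"
  by (simp add: circ_concat_def circ_size_def Let_def)

lemma circ_eval_circ_concat:
  assumes "length x = n"
  shows "circ_eval (circ_concat n Cf Cb) x = circ_eval Cf x @ circ_eval Cb x"
proof -
  obtain vf where vf: "eval_wires x (fst Cf) = x @ vf" "length vf = length (fst Cf)"
    using eval_wires_extends by blast
  obtain vb where vb: "eval_wires x (fst Cb) = x @ vb" "length vb = length (fst Cb)"
    using eval_wires_extends by blast
  define z where "z = n + length (fst Cf)"
  define r where "r = shift_wires n (length (fst Cf) + 1) (n + length (fst Cb)) z"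
  have z: "z < n + length (vf @ [False])" "\<not> (x @ vf @ [False]) ! z"
    using assms vf by (auto simp: z_def nth_append)
  have wires: "eval_wires x (fst (circ_concat n Cf Cb)) = x @ (vf @ [False]) @ vb"
  proof -
    have "eval_wires x (fst (circ_concat n Cf Cb))
        = eval_wires (x @ (vf @ [False]) @ []) (map (map_gate r) (fst Cb))"
      by (simp add: circ_concat_def Let_def z_def r_def eval_wires_append vf)
    also have "\<dots> = x @ (vf @ [False]) @ drop n (eval_wires (x @ []) (fst Cb))"
      unfolding r_def using eval_wires_shift_wires[OF assms _ z] vf by simp
    finally show ?thesis using vb assms by simp
  qed
  have "wire (x @ (vf @ [False]) @ vb) (if q < z then q else z) = wire (x @ vf) q" for q
    using assms vf by (auto simp: wire_def nth_append z_def)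
  moreover have "wire (x @ (vf @ [False]) @ vb) (r j) = wire (x @ vb) j" for j
    unfolding r_def using wire_shift_wires[OF assms _ z] vf vb by simp
  ultimately show ?thesis
    unfolding circ_eval_def wires
    by (simp add: circ_concat_def Let_def vf vb z_def[symmetric] r_def[symmetric, simplified])
qed

lemma poly_computable_append:
  assumes "poly_computable f" "poly_computable h"
  shows "poly_computable (\<lambda>x. f x @ h x)"
proof -
  obtain Cf where Cf: "poly_bounded (\<lambda>n. circ_size (Cf n))" "\<And>x. circ_eval (Cf (length x)) x = f x"
    using assms(1) unfolding poly_computable_def by blast
  obtain Ch where Ch: "poly_bounded (\<lambda>n. circ_size (Ch n))" "\<And>x. circ_eval (Ch (length x)) x = h x"
    using assms(2) unfolding poly_computable_def by blast
  have "poly_bounded (\<lambda>n. circ_size (circ_concat n (Cf n) (Ch n)))"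
    by (rule poly_bounded_le[OF poly_bounded_add[OF Cf(1) Ch(1)], where c = 1])
       (simp add: circ_size_circ_concat)
  moreover have "circ_eval (circ_concat (length x) (Cf (length x)) (Ch (length x))) x = f x @ h x"
    for x
    by (simp add: circ_eval_circ_concat Cf(2) Ch(2))
  ultimately show ?thesis
    unfolding poly_computable_def by (intro exI[of _ "\<lambda>n. circ_concat n (Cf n) (Ch n)"]) simp
qed

text \<open>The wire carrying the output bit of a single-output circuit with L wires, once a
  constant-False wire L has been appended.\<close>
definition out_wire :: "nat \<Rightarrow> circuit \<Rightarrow> nat" where
  "out_wire L C = (case snd C of [q] \<Rightarrow> if q < L then q else L | _ \<Rightarrow> L)"

lemma out1_eq_wire_out_wire:
  assumes "eval_wires z (fst C) = z @ v" "length v = length (fst C)"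
  shows "out1 C z = wire (z @ v @ False # u) (out_wire (length z + length (fst C)) C)"
  using assms
  by (cases "snd C" rule: remdups_adj.cases)
     (auto simp: out1_def circ_eval_def out_wire_def wire_def nth_append)

definition bit_test :: "nat \<Rightarrow> bool \<Rightarrow> gate" where
  "bit_test i c = (if c then GOr i i else GNot i)"

lemma gate_val_bit_test: "gate_val ws (bit_test i c) = (wire ws i = c)"
  by (simp add: bit_test_def)

definition guard_circ :: "nat \<Rightarrow> nat \<Rightarrow> bool \<Rightarrow> circuit \<Rightarrow> circuit" where
  "guard_circ m i c C = (let L = m + length (fst C) in
     (fst C @ [GConst False, bit_test i c, GAnd (out_wire L C) (L + 1)], [L + 2]))"

definition not_circ :: "nat \<Rightarrow> circuit \<Rightarrow> circuit" where
  "not_circ m C = (let L = m + length (fst C) in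
     (fst C @ [GConst False, GNot (out_wire L C)], [L + 1]))"

lemma circ_size_guard_circ: "circ_size (guard_circ m i c C) \<le> circ_size C + 4"
  by (simp add: guard_circ_def Let_def circ_size_def)

lemma circ_size_not_circ: "circ_size (not_circ m C) \<le> circ_size C + 3"
  by (simp add: not_circ_def Let_def circ_size_def)

lemma out1_guard_circ:
  assumes "length z = m" "i < m"
  shows "out1 (guard_circ m i c C) z = (z ! i = c \<and> out1 C z)"
proof -
  obtain v where v: "eval_wires z (fst C) = z @ v" "length v = length (fst C)"
    using eval_wires_extends by blast
  define L where "L = m + length (fst C)"
  define t where "t = (z ! i = c)"
  have test: "wire (z @ v @ [False]) i = z ! i"
    using assms by (simp add: wire_def nth_append)
  have out: "out1 C z = wire (z @ v @ [False, t]) (out_wire L C)"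
    using out1_eq_wire_out_wire[OF v] assms by (simp add: L_def)
  have "eval_wires z (fst (guard_circ m i c C)) = z @ v @ [False, t, out1 C z \<and> t]"
    using v test out assms
    by (simp add: guard_circ_def Let_def eval_wires_append gate_val_bit_test t_def L_def
        wire_def nth_append)
  then show ?thesis
    using assms v by (auto simp: out1_def circ_eval_def guard_circ_def Let_def wire_def
        nth_append t_def)
qed

lemma out1_not_circ:
  assumes "length z = m"
  shows "out1 (not_circ m C) z = (\<not> out1 C z)"
proof -
  obtain v where v: "eval_wires z (fst C) = z @ v" "length v = length (fst C)"
    using eval_wires_extends by blast
  have "eval_wires z (fst (not_circ m C)) = z @ v @ [False, \<not> out1 C z]"
    using v out1_eq_wire_out_wire[OF v, of "[]"] assms
    by (simp add: not_circ_def Let_def eval_wires_append)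
  then show ?thesis
    using assms v by (auto simp: out1_def circ_eval_def not_circ_def Let_def wire_def nth_append)
qed

text \<open>The first witness bit plays the role of the fixed last input bit c.\<close>
definition nd_snoc :: "nat \<Rightarrow> bool \<Rightarrow> ndcircuit \<Rightarrow> ndcircuit" where
  "nd_snoc n c D = (guard_circ (n + 1 + snd D) n c (fst D), Suc (snd D))"

definition nd_complement :: "nat \<Rightarrow> ndcircuit \<Rightarrow> ndcircuit" where
  "nd_complement n A = (not_circ (n + snd A) (fst A), snd A)"

lemma nd_size_nd_snoc: "nd_size (nd_snoc n c D) \<le> nd_size D + 5"
  using circ_size_guard_circ[of "n + 1 + snd D" n c "fst D"]
  by (simp add: nd_snoc_def nd_size_def)

lemma nd_size_nd_complement: "nd_size (nd_complement n A) \<le> nd_size A + 3"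
  using circ_size_not_circ[of "n + snd A" "fst A"]
  by (simp add: nd_complement_def nd_size_def)

lemma nd_accepts_nd_snoc:
  assumes "length y = n"
  shows "nd_accepts (nd_snoc n c D) y = nd_accepts D (y @ [c])"
proof -
  have "out1 (guard_circ (n + 1 + snd D) n c (fst D)) (y @ c' # w)
      = (c' = c \<and> out1 (fst D) (y @ c' # w))" if "length w = snd D" for c' w
    using out1_guard_circ[of "y @ c' # w" "n + 1 + snd D" n] assms that by (simp add: nth_append)
  then show ?thesis
    unfolding nd_accepts_def nd_snoc_def by (auto simp: length_Suc_conv)
qed

lemma cond_accepts_nd_complement:
  assumes "length y = n"
  shows "cond_accepts (nd_complement n A) y = (\<not> nd_accepts A y)"
  using assms by (simp add: cond_accepts_def nd_accepts_def nd_complement_def out1_not_circ)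

lemma finite_bool_lists_length: "finite {x :: bool list. length x = n \<and> P x}"
  using finite_lists_length_eq[of "UNIV :: bool set" n] by (rule rev_finite_subset) auto

lemma prob_cong: "(\<And>x. length x = n \<Longrightarrow> P x = Q x) \<Longrightarrow> prob n P = prob n Q"
proof -
  assume "\<And>x. length x = n \<Longrightarrow> P x = Q x"
  then have "{x. length x = n \<and> P x} = {x. length x = n \<and> Q x}" by auto
  then show ?thesis unfolding prob_def by simp
qed

lemma prob_split: "prob n P = prob n (\<lambda>x. P x \<and> Q x) + prob n (\<lambda>x. P x \<and> \<not> Q x)"
proof -
  have "{x. length x = n \<and> P x}
      = {x. length x = n \<and> P x \<and> Q x} \<union> {x. length x = n \<and> P x \<and> \<not> Q x}"
    by auto
  then have "card {x. length x = n \<and> P x}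
      = card {x. length x = n \<and> P x \<and> Q x} + card {x. length x = n \<and> P x \<and> \<not> Q x}"
    by (simp add: card_Un_disjoint finite_bool_lists_length disjoint_iff)
  then show ?thesis unfolding prob_def by (simp add: add_divide_distrib)
qed

lemma prob_True: "prob n (\<lambda>x. True) = 1"
  using card_lists_length_eq[of "UNIV :: bool set" n] by (simp add: prob_def)

lemma prob_Suc:
  "prob (Suc n) P = (prob n (\<lambda>y. P (y @ [False])) + prob n (\<lambda>y. P (y @ [True]))) / 2"
proof -
  let ?A = "{y. length y = n \<and> P (y @ [False])}" and ?B = "{y. length y = n \<and> P (y @ [True])}"
  have split_last: "{x. length x = Suc n \<and> P x} = (\<lambda>y. y @ [False]) ` ?A \<union> (\<lambda>y. y @ [True]) ` ?B"
  proof (intro equalityI subsetI)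
    fix x assume x: "x \<in> {x. length x = Suc n \<and> P x}"
    then obtain y c where "x = y @ [c]" by (cases x rule: rev_exhaust) auto
    with x show "x \<in> (\<lambda>y. y @ [False]) ` ?A \<union> (\<lambda>y. y @ [True]) ` ?B"
      by (cases c) auto
  qed auto
  have "card {x. length x = Suc n \<and> P x} = card ?A + card ?B"
    unfolding split_last
    by (subst card_Un_disjoint) (auto simp: finite_bool_lists_length card_image inj_on_def)
  then show ?thesis unfolding prob_def by (simp add: add_divide_distrib)
qed

lemma distinguisher_advantage_split:
  fixes D :: "bool list \<Rightarrow> bool"
  assumes "prob (Suc n) D - prob n (\<lambda>x. D (f x @ [b x])) \<ge> \<epsilon>"
  shows "prob n (\<lambda>x. \<not> D (f x @ [False]) \<and> \<not> b x) + 1/2 * prob n (\<lambda>y. D (y @ [False]))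
           \<ge> 1/2 + \<epsilon>/2
       \<or> prob n (\<lambda>x. \<not> D (f x @ [True]) \<and> b x) + 1/2 * prob n (\<lambda>y. D (y @ [True]))
           \<ge> 1/2 + \<epsilon>/2"
proof -
  have "prob n (\<lambda>x. D (f x @ [b x]))
      = prob n (\<lambda>x. D (f x @ [b x]) \<and> b x) + prob n (\<lambda>x. D (f x @ [b x]) \<and> \<not> b x)"
    by (rule prob_split)
  also have "\<dots> = prob n (\<lambda>x. D (f x @ [True]) \<and> b x) + prob n (\<lambda>x. D (f x @ [False]) \<and> \<not> b x)"
    by (intro arg_cong2[where f = "(+)"] prob_cong) auto
  finally have accept: "prob n (\<lambda>x. D (f x @ [b x]))
      = prob n (\<lambda>x. D (f x @ [True]) \<and> b x) + prob n (\<lambda>x. D (f x @ [False]) \<and> \<not> b x)" .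
  have "1 = prob n b + prob n (\<lambda>x. \<not> b x)"
    using prob_split[of n "\<lambda>x. True" b] prob_True by simp
  also have "prob n b = prob n (\<lambda>x. D (f x @ [True]) \<and> b x) + prob n (\<lambda>x. \<not> D (f x @ [True]) \<and> b x)"
    using prob_split[of n b "\<lambda>x. D (f x @ [True])"] by (simp add: conj_commute)
  also have "prob n (\<lambda>x. \<not> b x)
      = prob n (\<lambda>x. D (f x @ [False]) \<and> \<not> b x) + prob n (\<lambda>x. \<not> D (f x @ [False]) \<and> \<not> b x)"
    using prob_split[of n "\<lambda>x. \<not> b x" "\<lambda>x. D (f x @ [False])"] by (simp add: conj_commute)
  finally have "prob n (\<lambda>x. \<not> D (f x @ [False]) \<and> \<not> b x) + 1/2 * prob n (\<lambda>y. D (y @ [False]))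
      + (prob n (\<lambda>x. \<not> D (f x @ [True]) \<and> b x) + 1/2 * prob n (\<lambda>y. D (y @ [True]))) \<ge> 1 + \<epsilon>"
    using assms accept prob_Suc[of n D] by argo
  then show ?thesis by linarith
qed

lemma nd_snoc_advantage:
  assumes "\<forall>x. length (f x) = length x"
    and "prob (Suc n) (nd_accepts D) - prob n (\<lambda>x. nd_accepts D (f x @ [b x])) \<ge> \<epsilon>"
  shows "prob n (\<lambda>x. \<not> nd_accepts (nd_snoc n False D) (f x) \<and> \<not> b x)
           + 1/2 * prob n (nd_accepts (nd_snoc n False D)) \<ge> 1/2 + \<epsilon>/2
       \<or> prob n (\<lambda>x. cond_accepts (nd_complement n (nd_snoc n True D)) (f x) \<and> b x)
           + 1/2 * prob n (\<lambda>y. \<not> cond_accepts (nd_complement n (nd_snoc n True D)) y) \<ge> 1/2 + \<epsilon>/2"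
proof -
  have "prob n (\<lambda>x. \<not> nd_accepts (nd_snoc n False D) (f x) \<and> \<not> b x)
      = prob n (\<lambda>x. \<not> nd_accepts D (f x @ [False]) \<and> \<not> b x)"
    "prob n (nd_accepts (nd_snoc n False D)) = prob n (\<lambda>y. nd_accepts D (y @ [False]))"
    "prob n (\<lambda>x. cond_accepts (nd_complement n (nd_snoc n True D)) (f x) \<and> b x)
      = prob n (\<lambda>x. \<not> nd_accepts D (f x @ [True]) \<and> b x)"
    "prob n (\<lambda>y. \<not> cond_accepts (nd_complement n (nd_snoc n True D)) y)
      = prob n (\<lambda>y. nd_accepts D (y @ [True]))"
    by (auto intro!: prob_cong simp: assms(1) nd_accepts_nd_snoc cond_accepts_nd_complement)
  then show ?thesis
    using distinguisher_advantage_split[OF assms(2)] by simp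
qed

lemma super_core_bounds_distinguisher:
  assumes "\<forall>x. length (f x) = length x" and core: "super_core (\<lambda>n. n) f b"
    and D: "poly_bounded (\<lambda>n. nd_size (D n))" and p: "p \<noteq> 0"
  shows "\<exists>N. \<forall>n\<ge>N. prob (n + 1) (nd_accepts (D n))
           - prob n (\<lambda>x. nd_accepts (D n) (f x @ [b x])) < 1 / real (poly p n)"
proof (rule ccontr)
  define A1 where "A1 n = nd_snoc n False (D n)" for n
  define A2 where "A2 n = nd_complement n (nd_snoc n True (D n))" for n
  have "poly_bounded (\<lambda>n. nd_size (A1 n))"
    unfolding A1_def by (rule poly_bounded_le[OF D nd_size_nd_snoc])
  have "nd_size (A2 n) \<le> nd_size (D n) + 8" for n
    using nd_size_nd_complement[of n "nd_snoc n True (D n)"] nd_size_nd_snoc[of n True "D n"]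
    unfolding A2_def by linarith
  then have "poly_bounded (\<lambda>n. nd_size (A2 n))"
    by (rule poly_bounded_le[OF D])
  define S where "S = {n.
          prob n (\<lambda>x. \<not> nd_accepts (A1 n) (f x) \<and> \<not> b x)
            + 1/2 * prob n (nd_accepts (A1 n)) \<ge> 1/2 + 1 / real (poly (smult 2 p) n)
        \<or> prob n (\<lambda>x. cond_accepts (A2 n) (f x) \<and> b x)
            + 1/2 * prob n (\<lambda>y. \<not> cond_accepts (A2 n) y) \<ge> 1/2 + 1 / real (poly (smult 2 p) n)}"
  have "n \<in> S" if "prob (n + 1) (nd_accepts (D n))
      - prob n (\<lambda>x. nd_accepts (D n) (f x @ [b x])) \<ge> 1 / real (poly p n)" for n
    using nd_snoc_advantage[OF assms(1), where D = "D n" and \<epsilon> = "1 / real (poly p n)"] that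
    by (simp add: S_def A1_def A2_def mult.commute)
  moreover assume "\<not> ?thesis"
  ultimately have "infinite S"
    unfolding infinite_nat_iff_unbounded_le by (meson not_less)
  moreover have "smult 2 p \<noteq> 0"
    using p by simp
  ultimately show False
    using core \<open>poly_bounded (\<lambda>n. nd_size (A1 n))\<close> \<open>poly_bounded (\<lambda>n. nd_size (A2 n))\<close>
    unfolding super_core_def S_def by blast
qed

theorem proposition6p2:
  fixes f :: "bool list \<Rightarrow> bool list" and b :: "bool list \<Rightarrow> bool"
  assumes "\<forall>x. length (f x) = length x"
    and "poly_computable f"
    and "super_core (\<lambda>n. n) f b"
  shows "super_bit (\<lambda>x. f x @ [b x])"
proof -
  have "poly_computable (\<lambda>x. [b x])"
    using assms(3) by (simp add: super_core_def poly_computable_pred_def)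
  with assms(2) have "poly_computable (\<lambda>x. f x @ [b x])"
    by (rule poly_computable_append)
  then show ?thesis
    unfolding super_bit_def
    using super_core_bounds_distinguisher[OF assms(1,3)] by simp
qed

end
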